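(* Let $\theta>1$, $r\in(\theta^{-1},\theta^{-1/2}]$ and $\rho\in(0,1]$, and set $s_\rho:=\max\big(1,\frac1\rho\big(\frac{\ln\theta}{\ln(r\theta)}-2\big)\big)$. Then for every $n\ge1$, every price sequence $p\in[1,\theta]^n$ with maximum $p^*$ and every prediction $y\in[1,\theta]$, \[ \frac{\mathsf{A}^\rho_r(p,y)}{p^*}\ \ge\ \max\Big(r,\ \frac{1}{r\theta}\,\mathcal{E}(p^*,y)^{s_\rho}\Big). \]
   Context: One-max search: fix $\theta>1$. An instance is a sequence of prices $p=(p_1,\dots,p_n)\in[1,\theta]^n$, revealed one at a time; the algorithm receives at the start a prediction $y\in[1,\theta]$ of $p^*:=\max_ip_i$. At each step the algorithm irrevocably accepts the current price (payoff = that price) or rejects it; if nothing is accepted by step $n$ the payoff is $1$. For $\Phi:[1,\theta]\to[1,\theta]$, the threshold algorithm $\mathsf{A}_\Phi$ accepts the first $p_i$ with $p_i\ge\Phi(y)$. Define $\varphi_r(z)=\frac{r\theta-1}{1-r}+\frac{1-r^2\theta}{1-r}\cdot\frac{z}{r\theta}$ (the line through $(r\theta,r\theta)$ and $(\theta,1/r)$), and for $\rho\in(0,1]$ the threshold \[ \Phi^\rho_r(y)=\begin{cases} r\theta & y\in[1,r\theta)\\ \varphi_r(y) & y\in[r\theta,\tfrac1r)\\ \varphi_r(\tfrac1r)+\big(\tfrac1r-\varphi_r(\tfrac1r)\big)\dfrac{y-\tfrac1r}{\rho(\theta-\tfrac1r)} & y\in[\tfrac1r,\tfrac1r+\rho(\theta-\tfrac1r))\\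 \tfrac1r & y\in[\tfrac1r+\rho(\theta-\tfrac1r),\theta].\end{cases} \] $\mathsf{A}^\rho_r:=\mathsf{A}_{\Phi^\rho_r}$. The multiplicative error is $\mathcal{E}(p^*,y)=\min\{p^*/y,\,y/p^*\}\in[\theta^{-1},1]$. *)

theory Defs
  imports Complex_Main
begin

definition threshold_payoff :: "(real \<Rightarrow> real) \<Rightarrow> real list \<Rightarrow> real \<Rightarrow> real" where
  "threshold_payoff Phi p y =
     (case find (\<lambda>x. x \<ge> Phi y) p of None \<Rightarrow> 1 | Some x \<Rightarrow> x)"

text \<open>The line through (r theta, r theta) and (theta, 1/r).\<close>
definition phi_line :: "real \<Rightarrow> real \<Rightarrow> real \<Rightarrow> real" where
  "phi_line theta r z = (r*theta - 1)/(1 - r) + (1 - r^2*theta)/(1 - r) * (z/(r*theta))"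

definition Phi_rho :: "real \<Rightarrow> real \<Rightarrow> real \<Rightarrow> real \<Rightarrow> real" where
  "Phi_rho theta r rho y =
     (if y < r*theta then r*theta
      else if y < 1/r then phi_line theta r y
      else if y < 1/r + rho*(theta - 1/r) then
        phi_line theta r (1/r) + (1/r - phi_line theta r (1/r)) * ((y - 1/r) / (rho*(theta - 1/r)))
      else 1/r)"

definition A_rho :: "real \<Rightarrow> real \<Rightarrow> real \<Rightarrow> real list \<Rightarrow> real \<Rightarrow> real" where
  "A_rho theta r rho p y = threshold_payoff (Phi_rho theta r rho) p y"

definition mult_err :: "real \<Rightarrow> real \<Rightarrow> real" where
  "mult_err pstar y = min (pstar / y) (y / pstar)"

end

theory Submission
  imports Defs "HOL-Analysis.Convex"
begin

text \<open>
  Robustness only uses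
  r theta \<le> Phi_rho y \<le> 1/r. For consistency: if some price p_i \<ge> Phi_rho y is accepted, then
  Phi_rho y \<ge> y / (r theta) suffices; if nothing is accepted, then p* < Phi_rho y, and the bound
  follows from Phi_rho(y)^(s+1) \<le> r theta y^s. For fixed s each of these constraints on the pair
  (y, Phi_rho y) cuts out a convex region of the plane (the last one because it can be rewritten as
  x^((s+1)/s) \<le> (r theta)^(1/s) y, with x^((s+1)/s) convex), so they are inherited by linear
  interpolation and need only be checked at the breakpoints. At the last breakpoint the check
  reduces, by concavity of ln, to the defining inequality of s_rho.
\<close>

definition line_through :: "real \<Rightarrow> real \<Rightarrow> real \<Rightarrow> real \<Rightarrow> real \<Rightarrow> real" where
  "line_through a u b v y = u + (v - u) * ((y - a) / (b - a))"

lemma line_through_eq_convex_combination: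
  assumes "a < b" "a \<le> y" "y \<le> b"
  obtains t where "0 \<le> t" "t \<le> 1" "y = (1 - t) * a + t * b"
    "\<And>u v. line_through a u b v y = (1 - t) * u + t * v"
proof
  let ?t = "(y - a) / (b - a)"
  show "0 \<le> ?t" "?t \<le> 1" using assms by simp_all
  have "(1 - ?t) * a + ?t * b = a + ?t * (b - a)" by (simp only: algebra_simps)
  also have "\<dots> = y" using assms by auto
  finally show "y = (1 - ?t) * a + ?t * b" by (rule sym)
  show "line_through a u b v y = (1 - ?t) * u + ?t * v" for u v
    unfolding line_through_def by (simp only: algebra_simps)
qed

lemma line_through_mono:
  assumes "a < b" "a \<le> y" "y \<le> b" "u \<le> u'" "v \<le> v'"
  shows "line_through a u b v y \<le> line_through a u' b v' y"
proof -
  obtain t where "0 \<le> t" "t \<le> 1" "\<And>u v. line_through a u b v y = (1 - t) * u + t * v"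
    using line_through_eq_convex_combination assms(1-3) by blast
  then show ?thesis using assms(4,5) by (simp add: add_mono mult_left_mono)
qed

lemma line_through_linear: "a \<noteq> b \<Longrightarrow> line_through a (m * a) b (m * b) y = m * y"
  by (simp add: line_through_def field_simps)

lemma line_through_const: "line_through a c b c y = c"
  by (simp add: line_through_def)

lemma powr_succ_le_iff:
  fixes x y k s :: real
  assumes "0 < x" "0 < y" "0 < k" "0 < s"
  shows "x powr (s + 1) \<le> k * y powr s \<longleftrightarrow> x powr ((s + 1) / s) \<le> k powr (1 / s) * y"
proof -
  have "x powr (s + 1) \<le> k * y powr s \<longleftrightarrow> (s + 1) * ln x \<le> ln k + s * ln y"
    using assms by (simp add: ln_mult flip: ln_le_cancel_iff)
  also have "\<dots> \<longleftrightarrow> s * ((s + 1) / s * ln x) \<le> s * (ln k / s + ln y)"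
    using assms by (simp add: distrib_left)
  also have "\<dots> \<longleftrightarrow> (s + 1) / s * ln x \<le> ln k / s + ln y"
    by (rule mult_le_cancel_left_pos[OF \<open>0 < s\<close>])
  also have "\<dots> \<longleftrightarrow> x powr ((s + 1) / s) \<le> k powr (1 / s) * y"
    using assms by (simp add: ln_mult flip: ln_le_cancel_iff)
  finally show ?thesis .
qed

lemma powr_succ_le_convex_combination:
  fixes s k t u v a b :: real
  assumes "0 < s" "0 < k" "0 < u" "0 < v" "0 < a" "0 < b" "0 \<le> t" "t \<le> 1"
    and "u powr (s + 1) \<le> k * a powr s" "v powr (s + 1) \<le> k * b powr s"
  shows "((1 - t) * u + t * v) powr (s + 1) \<le> k * ((1 - t) * a + t * b) powr s"
proof -
  let ?q = "(s + 1) / s" and ?c = "k powr (1 / s)"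
  have convex: "convex_on {0<..} (\<lambda>x. x powr ?q)"
    using assms by (intro powr_convex) (simp add: field_simps)
  have "((1 - t) * u + t * v) powr ?q \<le> (1 - t) * u powr ?q + t * v powr ?q"
    using convex_onD[OF convex, of t u v] assms by simp
  also have "\<dots> \<le> (1 - t) * (?c * a) + t * (?c * b)"
    using assms by (intro add_mono mult_left_mono) (simp_all flip: powr_succ_le_iff)
  also have "\<dots> = ?c * ((1 - t) * a + t * b)" by (simp add: algebra_simps)
  finally have "((1 - t) * u + t * v) powr ?q \<le> ?c * ((1 - t) * a + t * b)" .
  moreover have "0 < (1 - t) * u + t * v" "0 < (1 - t) * a + t * b"
    using assms by (cases "t = 0"; simp add: add_nonneg_pos add_pos_nonneg)+
  ultimately show ?thesis using assms by (simp add: powr_succ_le_iff)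
qed

lemma line_through_powr_succ_le:
  assumes "0 < a" "a < b" "a \<le> y" "y \<le> b" "0 < u" "0 < v" "0 < s" "0 < k"
    and "u powr (s + 1) \<le> k * a powr s" "v powr (s + 1) \<le> k * b powr s"
  shows "line_through a u b v y powr (s + 1) \<le> k * y powr s"
proof -
  obtain t where "0 \<le> t" "t \<le> 1" "y = (1 - t) * a + t * b"
    "line_through a u b v y = (1 - t) * u + t * v"
    using line_through_eq_convex_combination assms(2-4) by metis
  then show ?thesis using powr_succ_le_convex_combination[of s k u v a b t] assms by simp
qed

lemma threshold_payoff_cases:
  obtains x where "x \<in> set p" "Phi y \<le> x" "threshold_payoff Phi p y = x"
  | "\<forall>x\<in>set p. x < Phi y" "threshold_payoff Phi p y = 1"
  unfolding threshold_payoff_def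
  by (cases "find (\<lambda>x. Phi y \<le> x) p") (auto simp: find_None_iff find_Some_iff not_le intro: nth_mem)

lemma threshold_payoff_robust:
  fixes Phi :: "real \<Rightarrow> real"
  assumes "p \<noteq> []" "\<forall>x\<in>set p. 1 \<le> x \<and> x \<le> theta" "0 < c"
    and "c * theta \<le> Phi y" "Phi y \<le> 1 / c"
  shows "c \<le> threshold_payoff Phi p y / Max (set p)"
proof -
  define P where "P = Max (set p)"
  have "P \<in> set p" using assms(1) by (simp add: P_def)
  then have P: "1 \<le> P" "P \<le> theta" using assms(2) by auto
  have "c \<le> threshold_payoff Phi p y / P"
  proof (cases rule: threshold_payoff_cases[where Phi = Phi and p = p and y = y])
    case (1 x)
    have "c * P \<le> c * theta" using P assms(3) by simp
    also have "\<dots> \<le> x" using assms(4) 1 by simp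
    finally show ?thesis using 1 P by (simp add: pos_le_divide_eq mult.commute)
  next
    case 2
    then have "P < Phi y" using \<open>P \<in> set p\<close> by blast
    then have "c * P \<le> c * Phi y" using assms(3) by simp
    also have "\<dots> \<le> 1" using assms(3,5) by (simp add: pos_le_divide_eq mult.commute)
    finally have "c * P \<le> 1" .
    then show ?thesis using 2 P by (simp add: pos_le_divide_eq mult.commute)
  qed
  then show ?thesis by (simp add: P_def)
qed

lemma mult_err_bounds:
  assumes "0 < x" "0 < y"
  shows "0 < mult_err x y" "mult_err x y \<le> 1" "mult_err x y \<le> y / x"
    and "x \<le> y \<Longrightarrow> mult_err x y = x / y"
proof -
  show "0 < mult_err x y" "mult_err x y \<le> y / x" using assms by (simp_all add: mult_err_def)
  show "mult_err x y \<le> 1"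
    using assms by (cases "x \<le> y") (simp_all add: mult_err_def min_le_iff_disj)
  assume "x \<le> y"
  then have "x / y \<le> y / x" using assms order_trans[of "x / y" 1 "y / x"] by simp
  then show "mult_err x y = x / y" by (simp add: mult_err_def)
qed

lemma mult_err_powr_le_inverse:
  assumes "0 < x" "x \<le> y" "0 < k" "x powr (s + 1) \<le> k * y powr s"
  shows "(1 / k) * mult_err x y powr s \<le> 1 / x"
proof -
  have "(1 / k) * mult_err x y powr s = x powr (s + 1) / (k * y powr s) / x"
    using assms mult_err_bounds(4)[of x y] by (simp add: powr_divide powr_add)
  also have "\<dots> \<le> 1 / x" using assms by (intro divide_right_mono) auto
  finally show ?thesis .
qed

lemma threshold_payoff_consistent:
  fixes Phi :: "real \<Rightarrow> real"
  assumes "p \<noteq> []" "\<forall>x\<in>set p. 1 \<le> x" "0 < y" "0 < k" "1 \<le> s"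
    and "y / k \<le> Phi y" "y < k \<Longrightarrow> Phi y \<le> k"
    and "k \<le> y \<Longrightarrow> Phi y \<le> y" "k \<le> y \<Longrightarrow> Phi y powr (s + 1) \<le> k * y powr s"
  shows "(1 / k) * mult_err (Max (set p)) y powr s \<le> threshold_payoff Phi p y / Max (set p)"
proof -
  define P where "P = Max (set p)"
  define E where "E = mult_err P y"
  have "P \<in> set p" using assms(1) by (simp add: P_def)
  then have "1 \<le> P" using assms(2) by auto
  then have E: "0 < E" "E \<le> 1" "E \<le> y / P"
    using mult_err_bounds[of P y] assms(3) by (simp_all add: E_def)
  have "(1 / k) * E powr s \<le> threshold_payoff Phi p y / P"
  proof (cases rule: threshold_payoff_cases[where Phi = Phi and p = p and y = y])
    case (1 x)
    have "E powr s \<le> y / P" using E powr_le_one_le[of E s] assms(5) by linarith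
    then have "(1 / k) * E powr s \<le> (1 / k) * (y / P)" using assms(4) by (intro mult_left_mono) auto
    also have "\<dots> = (y / k) / P" by simp
    also have "\<dots> \<le> x / P"
      using assms(6) 1 \<open>1 \<le> P\<close> by (intro divide_right_mono) auto
    finally show ?thesis using 1 by simp
  next
    case 2
    then have "P < Phi y" using \<open>P \<in> set p\<close> by blast
    show ?thesis
    proof (cases "P \<le> k")
      case True
      have "E powr s \<le> 1" using E assms(5) by (simp add: powr_le1)
      then have "(1 / k) * E powr s \<le> 1 / k" using assms(4) by (simp add: divide_right_mono)
      also have "\<dots> \<le> 1 / P" using True \<open>1 \<le> P\<close> by (simp add: frac_le)
      finally show ?thesis using 2 by simp
    next
      case False
      then have "k \<le> y" using \<open>P < Phi y\<close> assms(7) by force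
      then have "P \<le> y" "P powr (s + 1) \<le> k * y powr s"
        using \<open>P < Phi y\<close> \<open>1 \<le> P\<close> assms(5,8,9) powr_mono2[of "s + 1" P "Phi y"] by auto
      then have "(1 / k) * E powr s \<le> 1 / P"
        using mult_err_powr_le_inverse \<open>1 \<le> P\<close> assms(4) by (simp add: E_def)
      then show ?thesis using 2 by simp
    qed
  qed
  then show ?thesis by (simp add: P_def E_def)
qed

locale Phi_rho_parameters =
  fixes theta r rho s :: real
  assumes theta_gt_1: "1 < theta"
    and r_gt: "1 / theta < r" and r_le: "r \<le> 1 / sqrt theta"
    and rho_pos: "0 < rho" and rho_le_1: "rho \<le> 1"
    and s_pos: "0 < s"
    and ln_theta_le: "ln theta \<le> (2 + rho * s) * ln (r * theta)"
      \<comment> \<open>s \<ge> (ln theta / ln (r theta) - 2) / rho, with the denominators cleared\<close>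
begin

lemma r_bounds: "0 < r" "r < 1" "1 < r * theta" "r * theta \<le> 1 / r" "1 / r < theta"
proof -
  have "0 < 1 / theta" using theta_gt_1 by simp
  then show "0 < r" using r_gt by linarith
  then show "1 < r * theta" "1 / r < theta" using r_gt theta_gt_1 by (simp_all add: field_simps)
  have "r * sqrt theta \<le> 1" using r_le theta_gt_1 by (simp add: pos_le_divide_eq)
  moreover have "0 \<le> r * sqrt theta" using \<open>0 < r\<close> theta_gt_1 by simp
  ultimately have "(r * sqrt theta) * (r * sqrt theta) \<le> 1" using mult_le_one by blast
  then have rr_theta: "r * r * theta \<le> 1" using theta_gt_1 by (simp add: algebra_simps)
  then show "r * theta \<le> 1 / r" using \<open>0 < r\<close> by (simp add: pos_le_divide_eq ac_simps)
  have "r * r * 1 < r * r * theta" using \<open>0 < r\<close> theta_gt_1 by (intro mult_strict_left_mono) simp_all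
  then have "r\<^sup>2 < 1" using rr_theta by (simp add: power2_eq_square)
  then show "r < 1" using \<open>0 < r\<close> by (simp add: abs_square_less_1)
qed

definition saturation_point :: real where
  "saturation_point = 1 / r + rho * (theta - 1 / r)"

lemma saturation_point_bounds: "1 / r < saturation_point" "saturation_point \<le> theta"
proof -
  have "0 < theta - 1 / r" using r_bounds by simp
  then show "1 / r < saturation_point" using rho_pos by (simp add: saturation_point_def)
  have "rho * (theta - 1 / r) \<le> theta - 1 / r"
    using \<open>0 < theta - 1 / r\<close> rho_pos mult_left_le_one_le[OF _ _ rho_le_1] by simp
  then show "saturation_point \<le> theta" by (simp add: saturation_point_def)
qed

lemma inverse_r_powr_le_saturation_point:
  "(1 / r) powr (s + 1) \<le> r * theta * saturation_point powr s"
proof -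
  let ?L = "ln (r * theta)"
  have ln_inverse_r: "ln (1 / r) = ln theta - ?L"
    using r_bounds theta_gt_1 by (simp add: ln_div ln_mult)
  have "(1 - rho) *\<^sub>R (1 / r) + rho *\<^sub>R theta = saturation_point"
    by (simp add: saturation_point_def diff_divide_distrib algebra_simps)
  then have "(1 - rho) * ln (1 / r) + rho * ln theta \<le> ln saturation_point"
    using concave_onD[OF ln_concave, of rho "1 / r" theta] rho_pos rho_le_1 r_bounds theta_gt_1
    by simp
  then have "s * ((1 - rho) * ln (1 / r) + rho * ln theta) \<le> s * ln saturation_point"
    using s_pos by simp
  then have "(s + 1) * ln (1 / r) \<le> ?L + s * ln saturation_point"
    using ln_theta_le unfolding ln_inverse_r by (simp add: algebra_simps)
  then have "ln ((1 / r) powr (s + 1)) \<le> ln (r * theta * saturation_point powr s)"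
    using r_bounds saturation_point_bounds by (simp add: ln_mult)
  then show ?thesis
    using r_bounds saturation_point_bounds by (subst (asm) ln_le_cancel_iff) auto
qed

definition admissible_threshold :: "real \<Rightarrow> real \<Rightarrow> bool" where
  "admissible_threshold y x \<longleftrightarrow>
     r * theta \<le> x \<and> x \<le> 1 / r \<and> x \<le> y \<and> y / (r * theta) \<le> x \<and>
     x powr (s + 1) \<le> r * theta * y powr s"

lemma admissible_threshold_line_through:
  assumes "r * theta \<le> a" "a < b" "a \<le> y" "y \<le> b"
    and "admissible_threshold a u" "admissible_threshold b v"
  shows "admissible_threshold y (line_through a u b v y)"
proof -
  have u: "r * theta \<le> u" "u \<le> 1 / r" "u \<le> a" "a / (r * theta) \<le> u"
    "u powr (s + 1) \<le> r * theta * a powr s"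
    using assms(5) by (simp_all add: admissible_threshold_def)
  have v: "r * theta \<le> v" "v \<le> 1 / r" "v \<le> b" "b / (r * theta) \<le> v"
    "v powr (s + 1) \<le> r * theta * b powr s"
    using assms(6) by (simp_all add: admissible_threshold_def)
  note mono = line_through_mono[OF assms(2-4)]
  have "r * theta \<le> line_through a u b v y"
    using mono[of "r * theta" u "r * theta" v] u v by (simp add: line_through_const)
  moreover have "line_through a u b v y \<le> 1 / r"
    using mono[of u "1 / r" v "1 / r"] u v by (simp add: line_through_const)
  moreover have "line_through a u b v y \<le> y"
    using mono[of u a v b] line_through_linear[of a b 1 y] u v assms(2) by simp
  moreover have "y / (r * theta) \<le> line_through a u b v y"
    using mono[of "a / (r * theta)" u "b / (r * theta)" v] line_through_linear[of a b "1 / (r * theta)" y]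
      u v assms(2) by simp
  moreover have "line_through a u b v y powr (s + 1) \<le> r * theta * y powr s"
    using line_through_powr_succ_le[OF _ assms(2-4) _ _ s_pos _ u(5) v(5)] u v assms(1) r_bounds
    by simp
  ultimately show ?thesis by (simp add: admissible_threshold_def)
qed

lemma admissible_threshold_r_theta: "admissible_threshold (r * theta) (r * theta)"
  using r_bounds by (simp add: admissible_threshold_def powr_add)

lemma admissible_threshold_inverse_r:
  assumes "saturation_point \<le> y" "y \<le> theta"
  shows "admissible_threshold y (1 / r)"
proof -
  have "y / (r * theta) \<le> theta / (r * theta)"
    using assms(2) r_bounds by (intro divide_right_mono) auto
  also have "\<dots> = 1 / r" using theta_gt_1 by simp
  finally have consistent: "y / (r * theta) \<le> 1 / r" .
  have "(1 / r) powr (s + 1) \<le> r * theta * saturation_point powr s"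
    by (rule inverse_r_powr_le_saturation_point)
  also have "\<dots> \<le> r * theta * y powr s"
    using assms(1) saturation_point_bounds r_bounds s_pos by (intro mult_left_mono powr_mono2) auto
  finally have "(1 / r) powr (s + 1) \<le> r * theta * y powr s" .
  with consistent show ?thesis
    using assms(1) saturation_point_bounds r_bounds theta_gt_1
    by (simp add: admissible_threshold_def)
qed

lemma phi_line_eq_line_through:
  "phi_line theta r y = line_through (r * theta) (r * theta) theta (1 / r) y"
proof -
  let ?c = "(1 - r\<^sup>2 * theta) / (1 - r)"
  have ne: "r \<noteq> 0" "theta \<noteq> 0" "1 - r \<noteq> 0" using r_bounds theta_gt_1 by auto
  have "line_through (r * theta) (r * theta) theta (1 / r) y
      = r * theta + ((1 - r\<^sup>2 * theta) / r) * ((y - r * theta) / (theta * (1 - r)))"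
    using ne by (simp add: line_through_def field_simps power2_eq_square)
  also have "\<dots> = r * theta + ?c * ((y - r * theta) / (r * theta))"
    by (simp add: ac_simps)
  also have "\<dots> = (r * theta - ?c) + ?c * (y / (r * theta))"
    using ne by (simp add: diff_divide_distrib right_diff_distrib)
  also have "r * theta - ?c = (r * theta - 1) / (1 - r)"
    using ne by (simp add: field_simps power2_eq_square)
  finally show ?thesis by (simp add: phi_line_def)
qed

lemma admissible_threshold_phi_line:
  assumes "r * theta \<le> y" "y \<le> theta"
  shows "admissible_threshold y (phi_line theta r y)"
  unfolding phi_line_eq_line_through
  using admissible_threshold_line_through[OF _ _ assms admissible_threshold_r_theta
      admissible_threshold_inverse_r[OF saturation_point_bounds(2)]] r_bounds
  by simp

lemma Phi_rho_cases:
  obtains "y < r * theta" "Phi_rho theta r rho y = r * theta"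
  | "r * theta \<le> y" "y < 1 / r" "Phi_rho theta r rho y = phi_line theta r y"
  | "1 / r \<le> y" "y < saturation_point"
    "Phi_rho theta r rho y = line_through (1 / r) (phi_line theta r (1 / r)) saturation_point (1 / r) y"
  | "saturation_point \<le> y" "Phi_rho theta r rho y = 1 / r"
proof -
  have "saturation_point - 1 / r = rho * (theta - 1 / r)" by (simp add: saturation_point_def)
  then show ?thesis
    using that unfolding Phi_rho_def line_through_def saturation_point_def[symmetric]
    by (cases "y < r * theta"; cases "y < 1 / r"; cases "y < saturation_point") auto
qed

lemma Phi_rho_admissible:
  assumes "r * theta \<le> y" "y \<le> theta"
  shows "admissible_threshold y (Phi_rho theta r rho y)"
proof (cases rule: Phi_rho_cases[of y])
  case 1
  then show ?thesis using assms by simp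
next
  case 2
  then show ?thesis using assms admissible_threshold_phi_line by simp
next
  case 3
  have "admissible_threshold (1 / r) (phi_line theta r (1 / r))"
    using r_bounds by (intro admissible_threshold_phi_line) auto
  moreover have "admissible_threshold saturation_point (1 / r)"
    using saturation_point_bounds by (intro admissible_threshold_inverse_r) auto
  ultimately show ?thesis
    using 3 r_bounds saturation_point_bounds admissible_threshold_line_through[of "1 / r" saturation_point y]
    by simp
next
  case 4
  then show ?thesis using assms admissible_threshold_inverse_r by simp
qed

lemma Phi_rho_bounds:
  assumes "y \<le> theta"
  shows "r * theta \<le> Phi_rho theta r rho y \<and> Phi_rho theta r rho y \<le> 1 / r \<and>
    y / (r * theta) \<le> Phi_rho theta r rho y"
proof (cases "r * theta \<le> y")
  case True
  then show ?thesis using Phi_rho_admissible assms by (simp add: admissible_threshold_def)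
next
  case False
  then have "y / (r * theta) < 1" using r_bounds by simp
  then have "y / (r * theta) \<le> r * theta" using r_bounds by linarith
  then show ?thesis using False r_bounds by (simp add: Phi_rho_def)
qed

lemma A_rho_robust:
  assumes "p \<noteq> []" "\<forall>x\<in>set p. 1 \<le> x \<and> x \<le> theta" "y \<le> theta"
  shows "r \<le> A_rho theta r rho p y / Max (set p)"
  unfolding A_rho_def
  using threshold_payoff_robust[OF assms(1,2) r_bounds(1)] Phi_rho_bounds[OF assms(3)] by simp

lemma A_rho_consistent:
  assumes "p \<noteq> []" "\<forall>x\<in>set p. 1 \<le> x \<and> x \<le> theta" "1 \<le> y" "y \<le> theta" "1 \<le> s"
  shows "(1 / (r * theta)) * mult_err (Max (set p)) y powr s \<le> A_rho theta r rho p y / Max (set p)"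
proof -
  have "y / (r * theta) \<le> Phi_rho theta r rho y" using Phi_rho_bounds[OF assms(4)] by simp
  moreover have "y < r * theta \<Longrightarrow> Phi_rho theta r rho y \<le> r * theta" by (simp add: Phi_rho_def)
  moreover have "Phi_rho theta r rho y \<le> y" "Phi_rho theta r rho y powr (s + 1) \<le> r * theta * y powr s"
    if "r * theta \<le> y"
    using Phi_rho_admissible[OF that assms(4)] by (simp_all add: admissible_threshold_def)
  ultimately show ?thesis
    unfolding A_rho_def using threshold_payoff_consistent[OF assms(1) _ _ _ assms(5)] assms(2,3) r_bounds
    by simp
qed

end

theorem theorem2:
  fixes theta r rho y :: real and p :: "real list"
  assumes "theta > 1"
    and "1/theta < r" and "r \<le> 1 / sqrt theta"
    and "0 < rho" and "rho \<le> 1"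
    and "length p \<ge> 1"
    and "\<forall>x\<in>set p. 1 \<le> x \<and> x \<le> theta"
    and "1 \<le> y" and "y \<le> theta"
  shows "A_rho theta r rho p y / Max (set p)
           \<ge> max r ((1/(r*theta)) *
                 mult_err (Max (set p)) y
                   powr (max 1 ((1/rho) * (ln theta / ln (r*theta) - 2))))"
proof -
  define s where "s = max 1 ((1/rho) * (ln theta / ln (r*theta) - 2))"
  have "0 < ln (r * theta)" using assms(1,2) by (simp add: field_simps)
  have "(1 / rho) * (ln theta / ln (r * theta) - 2) \<le> s" by (simp add: s_def)
  then have "ln theta / ln (r * theta) \<le> 2 + rho * s" using assms(4) by (simp add: field_simps)
  then have "ln theta \<le> (2 + rho * s) * ln (r * theta)"
    using \<open>0 < ln (r * theta)\<close> by (simp add: divide_le_eq)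
  moreover have "1 \<le> s" by (simp add: s_def)
  ultimately interpret Phi_rho_parameters theta r rho s
    using assms(1-5) by unfold_locales auto
  have "p \<noteq> []" using assms(6) by auto
  show ?thesis
    unfolding s_def[symmetric]
    using A_rho_robust[OF \<open>p \<noteq> []\<close> assms(7,9)] A_rho_consistent[OF \<open>p \<noteq> []\<close> assms(7-9) \<open>1 \<le> s\<close>]
    by simp
qed

end
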